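(* Let $T$ be the rotation of angle $\alpha$ on $\mathbb T=\mathbb R/\mathbb Z$ (with uniform measure $Leb_{\mathbb T}$), let $\lambda\in(0,1)$ be such that $1/\lambda$ is a Pisot number, and let $b:\mathbb T\to\mathbb Z$ be constant on each interval of a partition $\mathbb T=\bigsqcup_{0\le i<N}[d_i,d_{i+1})$ (with $d_N=d_0$). Let $X(x)=\sum_{k\ge0}\lambda^k b(T^kx)$ and let $P_X$ be the image of $Leb_{\mathbb T}$ under $X$. Then $P_X$ is not a Rajchman measure.
   Context: A Pisot number is a real algebraic integer $\rho>1$ all of whose Galois conjugates other than $\rho$ have modulus $<1$. The Fourier transform of $P_X$ is $\hat P_X(t)=\int_{\mathbb R}e^{2i\pi tx}\,dP_X(x)$, and $P_X$ is a Rajchman measure if $\hat P_X(t)\to0$ as $t\to+\infty$. *)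

theory Defs
  imports "HOL-Analysis.Analysis" "HOL-Computational_Algebra.Polynomial_Factorial"
begin

definition pisot :: "real \<Rightarrow> bool" where
  "pisot \<rho> \<longleftrightarrow> \<rho> > 1 \<and> algebraic_int \<rho> \<and>
     (\<exists>p :: int poly. irreducible p \<and> poly (map_poly of_int p) (complex_of_real \<rho>) = 0 \<and>
        (\<forall>z::complex. poly (map_poly of_int p) z = 0 \<and> z \<noteq> complex_of_real \<rho> \<longrightarrow> cmod z < 1))"

text \<open>Uniform (Lebesgue) probability measure on the circle R/Z, realised on [0,1).\<close>
definition leb_T :: "real measure" where
  "leb_T = restrict_space lborel {0..<1}"

definition fourier_transform :: "real measure \<Rightarrow> real \<Rightarrow> complex" where
  "fourier_transform P t = (CLINT x|P. exp (2 * \<i> * complex_of_real (pi * t * x)))"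

definition rajchman :: "real measure \<Rightarrow> bool" where
  "rajchman P \<longleftrightarrow> ((fourier_transform P) \<longlongrightarrow> 0) at_top"

end

theory Submission
  imports Defs
    "HOL-Computational_Algebra.Formal_Power_Series"
    "HOL-Computational_Algebra.Fundamental_Theorem_Algebra"
    "HOL-Probability.Probability_Measure"
begin

(* Put \<theta> = 1/\<lambda> and e(w) = exp(2 \<pi> i w). The power sums of the conjugates of the Pisot
   number \<theta> are integers, so there are \<mu> \<ge> 1 and integers a_j with |\<mu> \<theta>^j - a_j| = O(r^j) for
   some r < 1. Hence, modulo integers, \<mu> \<theta>^n X(x) equals a function phase_n(x) which up to an
   error O(\<rho>^K) is a combination of 2K translates of b, and therefore lies within O(\<rho>^K) of a
   set of at most 2KN + 1 values. If P_X were Rajchman, the Fourier coefficients of e(m phase_n),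
   0 < |m| < L, would tend to 0 as n grows. A Fejer-kernel argument shows that a function
   within 1/(6L) of a set A whose coefficients at these frequencies are at most 1/L satisfies
   L \<le> 8 |A|; this fails for L = 16KN + 9 once K is large. *)

section \<open>Pisot numbers\<close>

lemma map_poly_of_int_add:
  "map_poly (of_int :: int \<Rightarrow> 'a::comm_ring_1) (p + q) = map_poly of_int p + map_poly of_int q"
  by (rule poly_eqI) (simp add: coeff_map_poly)

lemma map_poly_of_int_mult:
  "map_poly (of_int :: int \<Rightarrow> 'a::comm_ring_1) (p * q) = map_poly of_int p * map_poly of_int q"
  by (rule poly_eqI) (simp add: coeff_map_poly coeff_mult)

lemma int_poly_root_imp_degree_pos:
  fixes x :: "'a::field_char_0"
  assumes "g \<noteq> 0" "poly (map_poly of_int g) x = 0"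
  shows "degree g > 0"
proof (rule ccontr)
  assume "\<not> degree g > 0"
  then have "g = [:coeff g 0:]" by (metis degree_0_id neq0_conv)
  then have "map_poly (of_int :: int \<Rightarrow> 'a) g = [:of_int (coeff g 0):]"
    by (metis map_poly_pCons of_int_0 map_poly_0)
  with assms(2) have "coeff g 0 = 0" by simp
  with \<open>g = _\<close> assms(1) show False by simp
qed

lemma min_degree_int_poly_dvd_smult:
  fixes x :: "'a::field_char_0"
  assumes g: "g \<noteq> 0" "poly (map_poly of_int g) x = 0"
    and g_min: "\<And>h. h \<noteq> 0 \<Longrightarrow> poly (map_poly of_int h) x = 0 \<Longrightarrow> degree g \<le> degree h"
    and h: "poly (map_poly of_int h) x = 0"
  obtains c where "c \<noteq> 0" "g dvd smult c h"
proof -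
  obtain s r where sr: "pseudo_divmod h g = (s, r)" by (metis surj_pair)
  define c where "c = lead_coeff g ^ (Suc (degree h) - degree g)"
  have eq: "smult c h = g * s + r" and r: "r = 0 \<or> degree r < degree g"
    using pseudo_divmod[OF g(1) sr] by (simp_all add: c_def)
  have "poly (map_poly (of_int :: int \<Rightarrow> 'a) (smult c h)) x = 0"
    by (simp add: map_poly_smult h)
  then have "poly (map_poly (of_int :: int \<Rightarrow> 'a) r) x = 0"
    using g(2) by (simp add: eq map_poly_of_int_add map_poly_of_int_mult)
  then have "r = 0" using r g_min[of r] by fastforce
  moreover have "c \<noteq> 0" using g(1) by (simp add: c_def)
  ultimately show ?thesis using eq that by auto
qed

text \<open>A nonzero integer polynomial \<open>g\<close> of least degree vanishing at \<open>x\<close> divides a nonzero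
  multiple of every polynomial vanishing at \<open>x\<close>; as \<open>p\<close> is prime in \<open>int poly\<close>, it divides
  \<open>g\<close> and hence \<open>q\<close>.\<close>

lemma irreducible_int_poly_dvd_of_common_root:
  fixes x :: "'a::field_char_0"
  assumes irr: "irreducible p" and p: "poly (map_poly of_int p) x = 0"
    and q: "poly (map_poly of_int q) x = 0"
  shows "p dvd q"
proof -
  define Z where "Z h \<longleftrightarrow> h \<noteq> 0 \<and> poly (map_poly of_int h) x = 0" for h :: "int poly"
  have "p \<noteq> 0" using irr by auto
  then have "Z p" using p by (simp add: Z_def)
  then obtain g where "Z g" and g_min: "\<And>h. Z h \<Longrightarrow> degree g \<le> degree h"
    using ex_has_least_nat[of Z p degree] by blast
  then have g: "g \<noteq> 0" "poly (map_poly of_int g) x = 0" by (simp_all add: Z_def)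
  have "prime_elem p" by (rule irreducible_imp_prime_poly[OF irr])
  obtain c where "c \<noteq> 0" and "g dvd smult c p"
    using min_degree_int_poly_dvd_smult[OF g _ p] g_min by (auto simp: Z_def)
  then obtain s where gs: "smult c p = g * s" by (auto elim: dvdE)
  have "\<not> p dvd s"
  proof
    assume "p dvd s"
    then obtain t where "s = p * t" by (auto elim: dvdE)
    with gs have "[:c:] * p = (g * t) * p" by (simp add: ac_simps)
    then have "[:c:] = g * t" using \<open>p \<noteq> 0\<close> by (metis mult_cancel_right)
    then have "degree g = 0"
      by (metis \<open>c \<noteq> 0\<close> degree_mult_eq degree_pCons_0 add_is_0 mult_zero_right pCons_eq_0_iff)
    with int_poly_root_imp_degree_pos[OF g] show False by simp
  qed
  moreover have "p dvd g * s" unfolding gs[symmetric] by (rule dvd_smult) simp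
  ultimately have "p dvd g" using \<open>prime_elem p\<close> by (simp add: prime_elem_dvd_mult_iff)
  obtain c' where "c' \<noteq> 0" and g_dvd: "g dvd smult c' q"
    using min_degree_int_poly_dvd_smult[OF g _ q] g_min by (auto simp: Z_def)
  then have "p dvd smult c' q" using dvd_trans[OF \<open>p dvd g\<close> g_dvd] by simp
  moreover have "\<not> p dvd [:c':]"
  proof
    assume "p dvd [:c':]"
    then have "degree p = 0"
      using \<open>c' \<noteq> 0\<close> by (metis degree_pCons_0 dvd_imp_degree_le le_zero_eq pCons_eq_0_iff)
    with int_poly_root_imp_degree_pos[OF \<open>p \<noteq> 0\<close> p] show False by simp
  qed
  ultimately show "p dvd q" using \<open>prime_elem p\<close> prime_elem_dvd_mult_iff[of p "[:c':]" q] by simp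
qed

lemma irreducible_int_poly_lead_coeff_unit:
  fixes x :: "'a::field_char_0"
  assumes "irreducible p" "poly (map_poly of_int p) x = 0"
    and "poly (map_poly of_int q) x = 0" "lead_coeff q = 1"
  shows "is_unit (lead_coeff p)"
proof -
  obtain t where "q = p * t"
    using irreducible_int_poly_dvd_of_common_root[OF assms(1-3)] by (auto elim: dvdE)
  then have "lead_coeff p * lead_coeff t = 1" using assms(4) by (simp add: lead_coeff_mult)
  then show ?thesis by (metis dvd_triv_left)
qed

lemma fps_power_sums_newton:
  fixes root :: "nat \<Rightarrow> complex"
  shows "fps_of_poly (\<Prod>i<d. [:1, - root i:]) * Abs_fps (\<lambda>j. \<Sum>i<d. root i ^ Suc j)
       = - fps_deriv (fps_of_poly (\<Prod>i<d. [:1, - root i:]))"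
proof (induction d)
  case 0
  then show ?case by (simp add: fps_zero_def[symmetric])
next
  case (Suc d)
  define P where "P = fps_of_poly (\<Prod>i<d. [:1, - root i:])"
  define z where "z = root d"
  define W where "W = (1 + fps_const (-z) * fps_X :: complex fps)"
  define S where "S = Abs_fps (\<lambda>j. \<Sum>i<d. root i ^ Suc j)"
  define T where "T = Abs_fps (\<lambda>j. z ^ Suc j)"
  have IH: "P * S = - fps_deriv P" using Suc by (simp add: P_def S_def)
  have WT: "W * T = fps_const z"
  proof (rule fps_ext)
    fix n
    show "fps_nth (W * T) n = fps_nth (fps_const z) n"
      by (cases n) (simp_all add: W_def T_def algebra_simps fps_X_mult_nth)
  qed
  have "fps_of_poly (\<Prod>i<Suc d. [:1, - root i:]) = P * W"
    by (simp add: P_def W_def z_def fps_of_poly_linear' fps_of_poly_mult)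
  moreover have "Abs_fps (\<lambda>j. \<Sum>i<Suc d. root i ^ Suc j) = S + T"
    by (rule fps_ext) (simp add: S_def T_def z_def)
  moreover have "P * W * (S + T) = W * (P * S) + P * (W * T)" by (simp add: algebra_simps)
  moreover have "fps_deriv W = fps_const (-z)" by (simp add: W_def)
  ultimately show ?case
    unfolding IH WT by (simp add: fps_const_neg[symmetric] algebra_simps del: fps_const_neg)
qed

lemma power_sums_Ints:
  fixes root :: "nat \<Rightarrow> complex"
  assumes "\<And>i. coeff (\<Prod>i<d. [:1, - root i:]) i \<in> \<int>"
  shows "(\<Sum>i<d. root i ^ Suc j) \<in> \<int>"
proof -
  define Q where "Q = (\<Prod>i<d. [:1, - root i:])"
  define s where "s j = (\<Sum>i<d. root i ^ Suc j)" for j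
  have Q0: "coeff Q 0 = 1"
    by (simp add: Q_def poly_0_coeff_0[symmetric] poly_prod)
  have newton: "(\<Sum>l\<le>j. coeff Q l * s (j - l)) = - (of_nat (Suc j) * coeff Q (Suc j))" for j
  proof -
    have "fps_nth (fps_of_poly Q * Abs_fps s) j = fps_nth (- fps_deriv (fps_of_poly Q)) j"
      using fps_power_sums_newton[of root d] by (simp add: Q_def s_def[abs_def])
    then show ?thesis by (simp add: fps_mult_nth atLeast0AtMost)
  qed
  have "s j \<in> \<int>"
  proof (induction j rule: less_induct)
    case (less j)
    have "(\<Sum>l\<le>j. coeff Q l * s (j - l)) = coeff Q 0 * s j + (\<Sum>l\<in>{1..j}. coeff Q l * s (j - l))"
      by (simp add: atMost_atLeast0 sum.atLeast_Suc_atMost)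
    then have "s j = - (of_nat (Suc j) * coeff Q (Suc j)) - (\<Sum>l\<in>{1..j}. coeff Q l * s (j - l))"
      using newton[of j] Q0 by simp
    also have "\<dots> \<in> \<int>"
      using less assms by (intro Ints_diff Ints_minus Ints_mult Ints_sum) (auto simp: Q_def)
    finally show ?case .
  qed
  then show ?thesis by (simp add: s_def)
qed

lemma power_sums_roots_int_poly_Ints:
  fixes p :: "int poly" and root :: "nat \<Rightarrow> complex"
  assumes unit: "is_unit (lead_coeff p)"
    and roots: "map_poly of_int p = smult (of_int (lead_coeff p)) (\<Prod>i<degree p. [:- root i, 1:])"
  shows "(\<Sum>i<degree p. root i ^ Suc j) \<in> \<int>"
proof -
  define lc where "lc = (of_int (lead_coeff p) :: complex)"
  have "lead_coeff p * lead_coeff p = 1"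
    using unit by (metis abs_mult_self_eq mult_1 zdvd1_eq)
  then have "lc * lc = 1" by (simp add: lc_def flip: of_int_mult)
  have reflect_linear: "reflect_poly [:- z, 1:] = [:1, - z:]" for z :: complex
    by (simp add: reflect_poly_def)
  have "reflect_poly (map_poly of_int p) = smult lc (\<Prod>i<degree p. [:1, - root i:])"
    by (subst roots) (simp add: lc_def reflect_poly_smult reflect_poly_prod reflect_linear)
  then have "(\<Prod>i<degree p. [:1, - root i:]) = smult lc (reflect_poly (map_poly of_int p))"
    using \<open>lc * lc = 1\<close> by (simp add: mult.assoc[symmetric])
  then have "coeff (\<Prod>i<degree p. [:1, - root i:]) i \<in> \<int>" for i
    by (auto simp: coeff_reflect_poly lc_def coeff_map_poly degree_map_poly)
  then show ?thesis by (rule power_sums_Ints)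
qed

lemma norm_sum_power_le:
  fixes z :: "'i \<Rightarrow> 'a::real_normed_field"
  assumes "\<And>i. i \<in> I \<Longrightarrow> norm (z i) \<le> r"
  shows "norm (\<Sum>i\<in>I. z i ^ j) \<le> real (card I) * r ^ j"
proof -
  have "norm (\<Sum>i\<in>I. z i ^ j) \<le> (\<Sum>i\<in>I. norm (z i) ^ j)"
    by (rule order.trans[OF norm_sum]) (simp add: norm_power)
  also have "\<dots> \<le> (\<Sum>i\<in>I. r ^ j)"
    using assms by (intro sum_mono power_mono) auto
  finally show ?thesis by simp
qed

text \<open>Here \<open>\<mu>\<close> counts the copies of \<open>\<theta>\<close> among the roots; the other roots make up the error.\<close>

lemma power_sums_near_integers:
  fixes root :: "nat \<Rightarrow> complex" and \<theta> :: real
  assumes ints: "\<And>j. (\<Sum>i<d. root i ^ Suc j) \<in> \<int>"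
    and small: "\<And>i. i < d \<Longrightarrow> root i \<noteq> \<theta> \<Longrightarrow> cmod (root i) < 1"
    and "\<exists>i<d. root i = \<theta>"
  obtains \<mu> :: nat and a :: "nat \<Rightarrow> int" and D r :: real
  where "\<And>j. j \<ge> 1 \<Longrightarrow> \<bar>real \<mu> * \<theta> ^ j - real_of_int (a j)\<bar> \<le> D * r ^ j"
    "\<mu> \<ge> 1" "0 < r" "r < 1" "D \<ge> 0"
proof -
  define I1 where "I1 = {i\<in>{..<d}. root i = \<theta>}"
  define I2 where "I2 = {i\<in>{..<d}. root i \<noteq> \<theta>}"
  have "I1 \<noteq> {}" "finite I1" "finite I2" using assms(3) by (auto simp: I1_def I2_def)
  then have \<mu>: "card I1 \<ge> 1" by (simp add: Suc_leI card_gt_0_iff)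
  define r where "r = Max (insert (1/2) ((\<lambda>i. cmod (root i)) ` I2))"
  have r_ge: "cmod (root i) \<le> r" if "i \<in> I2" for i
    unfolding r_def using that \<open>finite I2\<close> by (intro Max_ge) auto
  have r: "0 < r" "r < 1"
    unfolding r_def using \<open>finite I2\<close> small by (auto simp: I2_def Max_gr_iff Max_less_iff)
  define a where "a j = \<lfloor>Re (\<Sum>i<d. root i ^ j)\<rfloor>" for j
  have approx: "\<bar>real (card I1) * \<theta> ^ j - real_of_int (a j)\<bar> \<le> real (card I2) * r ^ j"
    if "j \<ge> 1" for j
  proof -
    from that obtain m where "j = Suc m" by (cases j) auto
    with ints[of m] obtain k where k: "(\<Sum>i<d. root i ^ j) = of_int k"
      by (auto elim: Ints_cases)
    then have "a j = k" by (simp add: a_def)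
    have "{..<d} = I1 \<union> I2" "I1 \<inter> I2 = {}" by (auto simp: I1_def I2_def)
    then have "(\<Sum>i<d. root i ^ j) = (\<Sum>i\<in>I1. root i ^ j) + (\<Sum>i\<in>I2. root i ^ j)"
      using \<open>finite I1\<close> \<open>finite I2\<close> by (simp add: sum.union_disjoint)
    moreover have "(\<Sum>i\<in>I1. root i ^ j) = of_nat (card I1) * of_real \<theta> ^ j"
      by (simp add: I1_def)
    ultimately have "of_int k = of_nat (card I1) * of_real \<theta> ^ j + (\<Sum>i\<in>I2. root i ^ j)"
      using k by simp
    then have "complex_of_real (real (card I1) * \<theta> ^ j - real_of_int (a j))
        = - (\<Sum>i\<in>I2. root i ^ j)"
      by (simp add: \<open>a j = k\<close>)
    then have "\<bar>real (card I1) * \<theta> ^ j - real_of_int (a j)\<bar> = cmod (\<Sum>i\<in>I2. root i ^ j)"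
      by (metis norm_minus_cancel norm_of_real)
    also have "\<dots> \<le> real (card I2) * r ^ j"
      using r_ge by (rule norm_sum_power_le)
    finally show ?thesis .
  qed
  show ?thesis by (rule that[OF approx \<mu> r of_nat_0_le_iff])
qed

lemma pisot_powers_near_integers:
  assumes "pisot \<theta>"
  obtains \<mu> :: nat and a :: "nat \<Rightarrow> int" and D r :: real
  where "\<And>j. j \<ge> 1 \<Longrightarrow> \<bar>real \<mu> * \<theta> ^ j - real_of_int (a j)\<bar> \<le> D * r ^ j"
    "\<mu> \<ge> 1" "0 < r" "r < 1" "D \<ge> 0"
proof -
  from assms obtain p where irr: "irreducible p"
    and p\<theta>: "poly (map_poly of_int p) (complex_of_real \<theta>) = 0"
    and conj: "\<And>z. poly (map_poly of_int p) z = 0 \<Longrightarrow> z \<noteq> of_real \<theta> \<Longrightarrow> cmod z < 1"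
    and "algebraic_int \<theta>"
    unfolding pisot_def by blast
  then obtain q where q: "poly (map_poly of_int q) \<theta> = 0" "lead_coeff q = 1"
    using algebraic_int_altdef_ipoly by blast
  have "poly (map_poly of_int q) (complex_of_real \<theta>) = of_real (poly (map_poly of_int q) \<theta>)"
    by (simp add: poly_altdef degree_map_poly coeff_map_poly)
  with q have "poly (map_poly of_int q) (complex_of_real \<theta>) = 0" by simp
  then have unit: "is_unit (lead_coeff p)"
    using irreducible_int_poly_lead_coeff_unit[OF irr p\<theta>] q(2) by blast
  define pC where "pC = (map_poly of_int p :: complex poly)"
  have "degree pC = degree p" "lead_coeff pC = of_int (lead_coeff p)"
    by (simp_all add: pC_def degree_map_poly coeff_map_poly)
  moreover obtain root where "smult (lead_coeff pC) (\<Prod>i<degree pC. [:- root i, 1:]) = pC"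
    using complex_poly_decompose' by blast
  ultimately have roots: "pC = smult (of_int (lead_coeff p)) (\<Prod>i<degree p. [:- root i, 1:])"
    by simp
  have "poly pC z = of_int (lead_coeff p) * (\<Prod>i<degree p. z - root i)" for z
    by (subst roots) (simp add: poly_prod)
  moreover have "lead_coeff p \<noteq> 0" using unit by auto
  ultimately have root_iff: "poly pC z = 0 \<longleftrightarrow> (\<exists>i<degree p. root i = z)" for z
    by (auto simp: prod_zero_iff)
  show ?thesis
  proof (rule power_sums_near_integers)
    show "(\<Sum>i<degree p. root i ^ Suc j) \<in> \<int>" for j
      using power_sums_roots_int_poly_Ints[OF unit roots[unfolded pC_def]] .
    show "cmod (root i) < 1" if "i < degree p" "root i \<noteq> of_real \<theta>" for i
      using conj[of "root i"] root_iff[of "root i"] that by (auto simp: pC_def)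
    show "\<exists>i<degree p. root i = of_real \<theta>"
      using root_iff p\<theta> by (auto simp: pC_def)
  qed (rule that)
qed

section \<open>Step functions on the circle\<close>

locale circle_step_function =
  fixes b :: "real \<Rightarrow> int" and N :: nat and d :: "nat \<Rightarrow> real"
  assumes b_periodic: "\<And>x. b (x + 1) = b x" and N_pos: "N \<ge> 1"
    and d_mono: "\<And>i j. i < j \<Longrightarrow> j \<le> N \<Longrightarrow> d i < d j" and d_wrap: "d N = d 0 + 1"
    and b_step: "\<And>i x. i < N \<Longrightarrow> d i \<le> x \<Longrightarrow> x < d (Suc i) \<Longrightarrow> b x = b (d i)"
begin

lemma b_add_of_nat: "b (x + real k) = b x"
proof (induction k arbitrary: x)
  case (Suc k)
  have "b (x + real (Suc k)) = b ((x + real k) + 1)" by (simp add: algebra_simps)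
  then show ?case using b_periodic Suc.IH by simp
qed simp

lemma b_add_of_int: "b (x + real_of_int z) = b x"
proof (cases "z \<ge> 0")
  case True
  then show ?thesis using b_add_of_nat[of x "nat z"] by simp
next
  case False
  then show ?thesis using b_add_of_nat[of "x + real_of_int z" "nat (- z)"] by simp
qed

lemma d_mono_le: "i \<le> j \<Longrightarrow> j \<le> N \<Longrightarrow> d i \<le> d j"
  using d_mono[of i j] by (cases "i = j") auto

lemma ex_step_index:
  assumes "d 0 \<le> y" "y < d N"
  obtains i where "i < N" "d i \<le> y" "y < d (Suc i)"
proof -
  define S where "S = {i. i \<le> N \<and> d i \<le> y}"
  have "finite S" "0 \<in> S" using assms by (auto simp: S_def)
  define i where "i = Max S"
  have "i \<in> S" unfolding i_def using \<open>finite S\<close> \<open>0 \<in> S\<close> by (intro Max_in) auto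
  then have "i \<le> N" "d i \<le> y" by (simp_all add: S_def)
  then have "i < N" using assms(2) by (cases "i = N") auto
  have "Suc i \<notin> S"
  proof
    assume "Suc i \<in> S"
    then have "Suc i \<le> i" unfolding i_def using \<open>finite S\<close> by simp
    then show False by simp
  qed
  then have "y < d (Suc i)" using \<open>i < N\<close> by (auto simp: S_def)
  then show ?thesis using that \<open>i < N\<close> \<open>d i \<le> y\<close> by blast
qed

lemma step_index_unique:
  assumes "i < N" "i' < N" "d i \<le> y" "y < d (Suc i)" "d i' \<le> y" "y < d (Suc i')"
  shows "i = i'"
proof (rule ccontr)
  assume "i \<noteq> i'"
  then consider "i < i'" | "i' < i" by linarith
  then show False
  proof cases
    case 1
    then have "d (Suc i) \<le> d i'" using assms by (intro d_mono_le) auto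
    then show False using assms by linarith
  next
    case 2
    then have "d (Suc i') \<le> d i" using assms by (intro d_mono_le) auto
    then show False using assms by linarith
  qed
qed

definition reduce :: "real \<Rightarrow> real" where
  "reduce x = x - real_of_int \<lfloor>x - d 0\<rfloor>"

lemma b_reduce: "b (reduce x) = b x"
  unfolding reduce_def using b_add_of_int[of "x - real_of_int \<lfloor>x - d 0\<rfloor>" "\<lfloor>x - d 0\<rfloor>"] by simp

lemma reduce_bounds: "d 0 \<le> reduce x" "reduce x < d N"
  using of_int_floor_le[of "x - d 0"] real_of_int_floor_add_one_gt[of "x - d 0"] d_wrap
  unfolding reduce_def by linarith+

lemma b_eq_step_value:
  obtains i where "i < N" "d i \<le> reduce x" "reduce x < d (Suc i)" "b x = b (d i)"
proof -
  obtain i where "i < N" "d i \<le> reduce x" "reduce x < d (Suc i)"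
    using ex_step_index[OF reduce_bounds] .
  with b_step[of i "reduce x"] show ?thesis using that by (simp add: b_reduce)
qed

lemma b_eq_if_no_breakpoint:
  assumes uv: "u \<le> v" "v < u + 1"
    and no_break: "\<And>i z. i < N \<Longrightarrow> u < d i + real_of_int z \<Longrightarrow> d i + real_of_int z \<le> v \<Longrightarrow> False"
  shows "b u = b v"
proof -
  define k where "k = \<lfloor>u - d 0\<rfloor>"
  have y: "reduce u = u - real_of_int k" by (simp add: reduce_def k_def)
  obtain i where i: "i < N" "d i \<le> reduce u" "reduce u < d (Suc i)" "b u = b (d i)"
    by (rule b_eq_step_value)
  have "v - real_of_int k < d (Suc i)"
  proof (rule ccontr)
    assume le: "\<not> v - real_of_int k < d (Suc i)"
    show False
    proof (cases "Suc i < N")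
      case True
      then show False using no_break[of "Suc i" k] le i y by simp
    next
      case False
      then have "Suc i = N" using i(1) by simp
      then have "d (Suc i) = d 0 + 1" using d_wrap by simp
      then show False using no_break[of 0 "k + 1"] le i y N_pos by simp
    qed
  qed
  moreover have "d i \<le> v - real_of_int k" using i uv y by simp
  ultimately have "b (v - real_of_int k) = b (d i)" using b_step i by blast
  then show ?thesis using b_add_of_int[of "v - real_of_int k" k] i by simp
qed

text \<open>A combination of translates \<open>x \<mapsto> b (x + \<beta> l)\<close> is constant between consecutive points
  of the set \<open>Q\<close> of shifted breakpoints reduced modulo 1, so on \<open>[0, 1)\<close> it only takes the
  values it takes on \<open>Q\<close>.\<close>

lemma image_sum_translates_subset:
  fixes c \<beta> :: "'i \<Rightarrow> real" and I :: "'i set"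
  defines "f \<equiv> (\<lambda>x. \<Sum>l\<in>I. c l * real_of_int (b (x + \<beta> l)))"
    and "Q \<equiv> insert 0 ((\<lambda>(i, l). frac (d i - \<beta> l)) ` ({..<N} \<times> I))"
  assumes "finite I"
  shows "f ` {0..<1} \<subseteq> f ` Q"
proof
  have "finite Q" using \<open>finite I\<close> by (simp add: Q_def)
  fix y assume "y \<in> f ` {0..<1}"
  then obtain x where x: "0 \<le> x" "x < 1" "y = f x" by auto
  define T where "T = {q\<in>Q. q \<le> x}"
  have "finite T" "0 \<in> T" using \<open>finite Q\<close> x by (simp_all add: T_def Q_def)
  define q where "q = Max T"
  have "q \<in> T" unfolding q_def using \<open>finite T\<close> \<open>0 \<in> T\<close> by (intro Max_in) auto
  then have q: "q \<in> Q" "q \<le> x" "0 \<le> q" by (auto simp: T_def Q_def frac_ge_0)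
  have "b (q + \<beta> l) = b (x + \<beta> l)" if l: "l \<in> I" for l
  proof (rule b_eq_if_no_breakpoint)
    fix i z assume i: "i < N" and "q + \<beta> l < d i + real_of_int z" "d i + real_of_int z \<le> x + \<beta> l"
    then have w: "q < d i + real_of_int z - \<beta> l" "d i + real_of_int z - \<beta> l \<le> x" by simp_all
    then have "frac (d i - \<beta> l) = d i + real_of_int z - \<beta> l"
      using q x by (auto simp: frac_unique_iff intro!: Ints_minus Ints_of_int[of "-z", simplified])
    then have "d i + real_of_int z - \<beta> l \<in> Q" using i l by (force simp: Q_def)
    then have "d i + real_of_int z - \<beta> l \<in> T" using w by (simp add: T_def)
    then have "d i + real_of_int z - \<beta> l \<le> q" unfolding q_def using \<open>finite T\<close> by simp
    then show False using w by simp
  qed (use q x in auto)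
  then have "f x = f q" unfolding f_def by (intro sum.cong) auto
  then show "y \<in> f ` Q" using x q by auto
qed

lemma card_image_sum_translates_le:
  fixes c \<beta> :: "'i \<Rightarrow> real" and I :: "'i set"
  defines "f \<equiv> (\<lambda>x. \<Sum>l\<in>I. c l * real_of_int (b (x + \<beta> l)))"
  assumes "finite I"
  shows "finite (f ` {0..<1})" "card (f ` {0..<1}) \<le> card I * N + 1"
proof -
  define Q where "Q = insert 0 ((\<lambda>(i, l). frac (d i - \<beta> l)) ` ({..<N} \<times> I))"
  have "finite Q" using \<open>finite I\<close> by (simp add: Q_def)
  have sub: "f ` {0..<1} \<subseteq> f ` Q"
    unfolding f_def Q_def by (rule image_sum_translates_subset[OF \<open>finite I\<close>])
  then show "finite (f ` {0..<1})" using \<open>finite Q\<close> by (meson finite_imageI finite_subset)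
  have "card (f ` {0..<1}) \<le> card (f ` Q)"
    using sub \<open>finite Q\<close> by (intro card_mono) auto
  also have "\<dots> \<le> card Q" using \<open>finite Q\<close> by (rule card_image_le)
  also have "\<dots> \<le> Suc (card ((\<lambda>(i, l). frac (d i - \<beta> l)) ` ({..<N} \<times> I)))"
    unfolding Q_def by (rule card_insert_le_m1) auto
  also have "\<dots> \<le> Suc (card ({..<N} \<times> I))"
    using \<open>finite I\<close> by (intro Suc_le_mono[THEN iffD2] card_image_le) simp
  also have "\<dots> = card I * N + 1" by (simp add: card_cartesian_product)
  finally show "card (f ` {0..<1}) \<le> card I * N + 1" .
qed

lemma abs_b_le: "\<bar>real_of_int (b x)\<bar> \<le> (\<Sum>i<N. \<bar>real_of_int (b (d i))\<bar>)"
proof -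
  obtain i where "i < N" "b x = b (d i)" by (rule b_eq_step_value)
  then show ?thesis by (auto intro: member_le_sum)
qed

lemma b_measurable [measurable]: "(\<lambda>x. real_of_int (b x)) \<in> borel_measurable borel"
proof -
  define g where "g y = (\<Sum>i<N. real_of_int (b (d i)) * indicator {d i..<d (Suc i)} y)" for y
  have "real_of_int (b x) = g (reduce x)" for x
  proof -
    obtain i where i: "i < N" "d i \<le> reduce x" "reduce x < d (Suc i)" "b x = b (d i)"
      by (rule b_eq_step_value)
    have "g (reduce x) = (\<Sum>j\<in>{i}. real_of_int (b (d j)) * indicator {d j..<d (Suc j)} (reduce x))"
      unfolding g_def using i
      by (intro sum.mono_neutral_right) (auto simp: indicator_def dest: step_index_unique[OF i(1)])
    then show ?thesis using i by (simp add: indicator_def)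
  qed
  moreover have "(\<lambda>x. g (reduce x)) \<in> borel_measurable borel"
    unfolding g_def reduce_def by measurable
  ultimately show ?thesis by simp
qed

end

section \<open>A Fejer-type counting bound\<close>

definition e2pi :: "real \<Rightarrow> complex" where
  "e2pi w = exp (2 * \<i> * complex_of_real (pi * w))"

lemma e2pi_add: "e2pi (u + v) = e2pi u * e2pi v"
  unfolding e2pi_def by (simp add: algebra_simps exp_add[symmetric])

lemma e2pi_of_int [simp]: "e2pi (real_of_int k) = 1"
proof -
  have "e2pi (real_of_int k) = exp (\<i> * (of_int k * (of_real pi * 2)))"
    unfolding e2pi_def by (simp add: algebra_simps)
  then show ?thesis by (simp add: exp_2pi_1_int)
qed

lemma e2pi_add_of_int: "e2pi (u + real_of_int k) = e2pi u"
  by (simp add: e2pi_add)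

lemma e2pi_0 [simp]: "e2pi 0 = 1"
  using e2pi_of_int[of 0] by simp

lemma norm_e2pi [simp]: "norm (e2pi w) = 1"
  unfolding e2pi_def by (metis mult.commute mult.left_commute norm_exp_i_times of_real_mult of_real_numeral)

lemma cnj_e2pi: "cnj (e2pi w) = e2pi (- w)"
  unfolding e2pi_def by (simp add: exp_cnj)

lemma Re_e2pi: "Re (e2pi w) = cos (2 * pi * w)"
  unfolding e2pi_def by (simp add: Re_exp mult.assoc)

lemma e2pi_measurable [measurable]:
  "f \<in> borel_measurable M \<Longrightarrow> (\<lambda>x. e2pi (f x)) \<in> borel_measurable M"
  unfolding e2pi_def by measurable

definition dirichlet_sum :: "nat \<Rightarrow> real \<Rightarrow> complex" where
  "dirichlet_sum L y = (\<Sum>k<L. e2pi (real k * y))"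

lemma norm_dirichlet_sum_le: "cmod (dirichlet_sum L y) \<le> real L"
  unfolding dirichlet_sum_def by (rule order.trans[OF norm_sum]) simp

lemma norm_dirichlet_sum_squared:
  "complex_of_real (cmod (dirichlet_sum L y) ^ 2) = (\<Sum>k<L. \<Sum>k'<L. e2pi ((real k - real k') * y))"
proof -
  have "complex_of_real (cmod (dirichlet_sum L y) ^ 2) = dirichlet_sum L y * cnj (dirichlet_sum L y)"
    by (rule complex_norm_square)
  also have "\<dots> = (\<Sum>k<L. \<Sum>k'<L. e2pi (real k * y) * e2pi (- (real k' * y)))"
    by (simp add: dirichlet_sum_def cnj_e2pi sum_product)
  also have "\<dots> = (\<Sum>k<L. \<Sum>k'<L. e2pi ((real k - real k') * y))"
    by (simp add: e2pi_add[symmetric] algebra_simps)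
  finally show ?thesis .
qed

lemma cos_ge_half: "\<bar>t\<bar> \<le> pi / 3 \<Longrightarrow> cos t \<ge> 1 / 2"
  using cos_monotone_0_pi_le[of "\<bar>t\<bar>" "pi / 3"] by (simp add: cos_60 cos_abs_real)

lemma norm_dirichlet_sum_ge:
  assumes "L \<ge> 1" and "\<bar>y\<bar> \<le> 1 / (6 * real L)"
  shows "cmod (dirichlet_sum L y) \<ge> real L / 2"
proof -
  have "(\<Sum>k<L. 1 / 2) \<le> (\<Sum>k<L. cos (2 * pi * (real k * y)))"
  proof (intro sum_mono cos_ge_half)
    fix k assume k: "k \<in> {..<L}"
    have "\<bar>2 * pi * (real k * y)\<bar> = 2 * pi * (real k * \<bar>y\<bar>)" by (simp add: abs_mult)
    also have "\<dots> \<le> 2 * pi * (real L * (1 / (6 * real L)))"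
      using k assms by (intro mult_left_mono mult_mono) auto
    also have "\<dots> = pi / 3" using assms by (simp add: field_simps)
    finally show "\<bar>2 * pi * (real k * y)\<bar> \<le> pi / 3" .
  qed
  also have "\<dots> = Re (dirichlet_sum L y)"
    by (simp add: dirichlet_sum_def Re_e2pi)
  finally show ?thesis using complex_Re_le_cmod[of "dirichlet_sum L y"] by simp
qed

lemma integral_norm_dirichlet_sum_squared:
  fixes M :: "'a measure" and F :: "'a \<Rightarrow> real"
  assumes "finite_measure M" and [measurable]: "F \<in> borel_measurable M"
  defines "I m \<equiv> (CLINT x|M. e2pi (real_of_int m * F x))"
  shows "complex_of_real (LINT x|M. cmod (dirichlet_sum L (F x - a)) ^ 2)
    = (\<Sum>k<L. \<Sum>k'<L. e2pi (- ((real k - real k') * a)) * I (int k - int k'))"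
proof -
  interpret finite_measure M by fact
  have e2pi_integrable: "integrable M (\<lambda>x. e2pi (c * (F x - a)))" for c
    by (rule integrable_const_bound[where B=1]) auto
  have "complex_of_real (LINT x|M. cmod (dirichlet_sum L (F x - a)) ^ 2)
      = (CLINT x|M. complex_of_real (cmod (dirichlet_sum L (F x - a)) ^ 2))"
    by (rule integral_complex_of_real[symmetric])
  also have "\<dots> = (CLINT x|M. \<Sum>k<L. \<Sum>k'<L. e2pi ((real k - real k') * (F x - a)))"
    by (simp only: norm_dirichlet_sum_squared)
  also have "\<dots> = (\<Sum>k<L. \<Sum>k'<L. CLINT x|M. e2pi ((real k - real k') * (F x - a)))"
    by (simp add: e2pi_integrable)
  also have "\<dots> = (\<Sum>k<L. \<Sum>k'<L. e2pi (- ((real k - real k') * a)) * I (int k - int k'))"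
  proof (intro sum.cong refl)
    fix k k'
    have "(\<lambda>x. e2pi ((real k - real k') * (F x - a)))
        = (\<lambda>x. e2pi (- ((real k - real k') * a)) * e2pi (real_of_int (int k - int k') * F x))"
      by (simp add: e2pi_add[symmetric] algebra_simps)
    then show "(CLINT x|M. e2pi ((real k - real k') * (F x - a)))
        = e2pi (- ((real k - real k') * a)) * I (int k - int k')"
      by (simp add: I_def)
  qed
  finally show ?thesis .
qed

text \<open>In the expansion above the \<open>L\<close> diagonal terms contribute \<open>L\<close> and each of the other
  terms at most \<open>1 / L\<close>.\<close>

lemma integral_norm_dirichlet_sum_squared_le:
  fixes M :: "'a measure" and F :: "'a \<Rightarrow> real"
  assumes "prob_space M" and [measurable]: "F \<in> borel_measurable M" and "L \<ge> 1"
    and small: "\<And>m::int. m \<noteq> 0 \<Longrightarrow> \<bar>m\<bar> < int L \<Longrightarrow>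
                  cmod (CLINT x|M. e2pi (real_of_int m * F x)) \<le> 1 / real L"
  shows "(LINT x|M. cmod (dirichlet_sum L (F x - a)) ^ 2) \<le> 2 * real L"
proof -
  interpret prob_space M by fact
  define I where "I m = (CLINT x|M. e2pi (real_of_int m * F x))" for m :: int
  note eq = integral_norm_dirichlet_sum_squared[OF finite_measure_axioms assms(2), of L a,
      folded I_def]
  have coeff_le: "cmod (I (int k - int k')) \<le> of_bool (k = k') + 1 / real L" if "k < L" "k' < L" for k k'
    using small[of "int k - int k'"] that by (cases "k = k'") (auto simp: I_def prob_space)
  have "(LINT x|M. cmod (dirichlet_sum L (F x - a)) ^ 2)
      \<le> cmod (complex_of_real (LINT x|M. cmod (dirichlet_sum L (F x - a)) ^ 2))"
    by simp
  also have "\<dots> \<le> (\<Sum>k<L. \<Sum>k'<L. of_bool (k = k') + 1 / real L)"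
    unfolding eq
    by (intro order.trans[OF norm_sum] sum_mono order.trans[OF norm_sum])
       (simp add: norm_mult coeff_le)
  also have "\<dots> = 2 * real L" using assms(3) by (simp add: sum.distrib)
  finally show ?thesis .
qed

text \<open>If \<open>F\<close> stays within \<open>1 / (6 L)\<close> of a finite set \<open>A\<close>, then for each \<open>x\<close> some
  \<open>|dirichlet_sum L (F x - a)|\<close> is at least \<open>L / 2\<close>; comparing with the upper bound
  above yields \<open>L\<^sup>2 / 4 \<le> 2 L card A\<close>.\<close>

lemma card_ge_if_small_fourier_coeffs:
  fixes M :: "'a measure" and F :: "'a \<Rightarrow> real" and A :: "real set"
  assumes "prob_space M" and [measurable]: "F \<in> borel_measurable M" and "finite A" and "L \<ge> 1"
    and near: "\<And>x. x \<in> space M \<Longrightarrow> \<exists>a\<in>A. \<bar>F x - a\<bar> \<le> 1 / (6 * real L)"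
    and small: "\<And>m::int. m \<noteq> 0 \<Longrightarrow> \<bar>m\<bar> < int L \<Longrightarrow>
                  cmod (CLINT x|M. e2pi (real_of_int m * F x)) \<le> 1 / real L"
  shows "real L \<le> 8 * real (card A)"
proof -
  interpret prob_space M by fact
  define G where "G x = (\<Sum>a\<in>A. cmod (dirichlet_sum L (F x - a)) ^ 2)" for x
  have integrable: "integrable M (\<lambda>x. cmod (dirichlet_sum L (F x - a)) ^ 2)" for a
  proof (rule integrable_const_bound[where B = "real L ^ 2"])
    show "AE x in M. norm (cmod (dirichlet_sum L (F x - a)) ^ 2) \<le> real L ^ 2"
      by (simp add: norm_dirichlet_sum_le power_mono)
  qed (simp add: dirichlet_sum_def)
  have G_integrable: "integrable M G" unfolding G_def by (intro Bochner_Integration.integrable_sum integrable)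
  have lower: "real L ^ 2 / 4 \<le> G x" if x: "x \<in> space M" for x
  proof -
    obtain a where a: "a \<in> A" "\<bar>F x - a\<bar> \<le> 1 / (6 * real L)" using near[OF x] by blast
    have "(real L / 2) ^ 2 \<le> cmod (dirichlet_sum L (F x - a)) ^ 2"
      using norm_dirichlet_sum_ge[OF assms(4) a(2)] by (intro power_mono) auto
    also have "\<dots> \<le> G x" unfolding G_def using a \<open>finite A\<close> by (intro member_le_sum) auto
    finally show ?thesis by (simp add: power_divide)
  qed
  have "(LINT x|M. real L ^ 2 / 4) \<le> integral\<^sup>L M G"
    by (intro integral_mono G_integrable lower) auto
  then have "real L ^ 2 / 4 \<le> integral\<^sup>L M G" by (simp add: prob_space)
  also have "\<dots> = (\<Sum>a\<in>A. LINT x|M. cmod (dirichlet_sum L (F x - a)) ^ 2)"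
    unfolding G_def by (rule Bochner_Integration.integral_sum) (rule integrable)
  also have "\<dots> \<le> (\<Sum>a\<in>A. 2 * real L)"
    by (intro sum_mono integral_norm_dirichlet_sum_squared_le) (use assms in auto)
  finally have "real L * real L \<le> real L * (8 * real (card A))"
    by (simp add: power2_eq_square algebra_simps)
  then show ?thesis using assms(4) by simp
qed

section \<open>Fourier transforms and orbit series\<close>

lemma space_leb_T: "space leb_T = {0..<1}"
  by (simp add: leb_T_def space_restrict_space)

lemma prob_space_leb_T: "prob_space leb_T"
proof
  show "emeasure leb_T (space leb_T) = 1"
    unfolding space_leb_T leb_T_def by (subst emeasure_restrict_space) auto
qed

lemma borel_measurable_leb_T: "f \<in> borel_measurable borel \<Longrightarrow> f \<in> borel_measurable leb_T"
  unfolding leb_T_def by (rule measurable_restrict_space1) (simp add: measurable_lborel2)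

lemma fourier_transform_distr:
  assumes "X \<in> borel_measurable M"
  shows "fourier_transform (distr M borel X) t = (CLINT x|M. e2pi (t * X x))"
  unfolding fourier_transform_def using assms
  by (subst integral_distr) (simp_all add: e2pi_def mult.assoc)

lemma fourier_transform_uminus: "fourier_transform P (- t) = cnj (fourier_transform P t)"
proof -
  have "cnj (fourier_transform P t) = (CLINT x|P. cnj (exp (2 * \<i> * complex_of_real (pi * t * x))))"
    unfolding fourier_transform_def by (rule Bochner_Integration.integral_cnj[symmetric])
  also have "\<dots> = fourier_transform P (- t)"
    unfolding fourier_transform_def by (simp add: exp_cnj)
  finally show ?thesis by simp
qed

lemma rajchman_tendsto_geometric:
  fixes c \<theta> :: real
  assumes raj: "rajchman P" and "c \<noteq> 0" "\<theta> > 1"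
  shows "(\<lambda>n. fourier_transform P (c * \<theta> ^ n)) \<longlonglongrightarrow> 0"
proof -
  have pos: "(\<lambda>n. fourier_transform P (c' * \<theta> ^ n)) \<longlonglongrightarrow> 0" if "c' > 0" for c'
  proof -
    have "filterlim (\<lambda>n. \<theta> ^ n) at_top sequentially"
      using \<open>\<theta> > 1\<close> by (intro filterlim_at_infinity_imp_filterlim_at_top
          filterlim_realpow_sequentially_gt1 always_eventually) auto
    then have "filterlim (\<lambda>n. c' * \<theta> ^ n) at_top sequentially"
      using that by (intro filterlim_tendsto_pos_mult_at_top[OF tendsto_const])
    with raj show ?thesis unfolding rajchman_def by (rule filterlim_compose)
  qed
  show ?thesis
  proof (cases "c > 0")
    case False
    then have "(\<lambda>n. cnj (fourier_transform P ((- c) * \<theta> ^ n))) \<longlonglongrightarrow> 0"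
      using pos[of "- c"] \<open>c \<noteq> 0\<close> tendsto_cnj by fastforce
    then show ?thesis by (simp flip: fourier_transform_uminus)
  qed (rule pos)
qed

definition orbit_series :: "real \<Rightarrow> real \<Rightarrow> (real \<Rightarrow> real) \<Rightarrow> real \<Rightarrow> real" where
  "orbit_series lam \<alpha> f x = (\<Sum>k. lam ^ k * f (x + real k * \<alpha>))"

lemma abs_orbit_term_le:
  fixes f :: "real \<Rightarrow> real"
  assumes "0 \<le> lam" "\<And>x. \<bar>f x\<bar> \<le> B"
  shows "\<bar>lam ^ k * f (x + real k * \<alpha>)\<bar> \<le> B * lam ^ k"
proof -
  have "\<bar>lam ^ k * f (x + real k * \<alpha>)\<bar> = lam ^ k * \<bar>f (x + real k * \<alpha>)\<bar>"
    using assms(1) by (simp add: abs_mult)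
  also have "\<dots> \<le> lam ^ k * B" using assms by (intro mult_left_mono) auto
  finally show ?thesis by (simp add: mult.commute)
qed

lemma summable_orbit_series:
  fixes f :: "real \<Rightarrow> real"
  assumes "0 \<le> lam" "lam < 1" "\<And>x. \<bar>f x\<bar> \<le> B"
  shows "summable (\<lambda>k. lam ^ k * f (x + real k * \<alpha>))"
proof -
  have "summable (\<lambda>k. B * lam ^ k)" using assms(1,2) by (intro summable_mult summable_geometric) auto
  then show ?thesis
    by (rule summable_comparison_test') (use abs_orbit_term_le[OF assms(1,3)] in simp)
qed

lemma orbit_series_split:
  assumes "0 \<le> lam" "lam < 1" "\<And>x. \<bar>f x\<bar> \<le> B"
  shows "orbit_series lam \<alpha> f x
    = (\<Sum>k<n. lam ^ k * f (x + real k * \<alpha>)) + lam ^ n * orbit_series lam \<alpha> f (x + real n * \<alpha>)"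
proof -
  note summable = summable_orbit_series[OF assms]
  have "(\<Sum>i. lam ^ (i + n) * f (x + real (i + n) * \<alpha>))
      = (\<Sum>i. lam ^ n * (lam ^ i * f ((x + real n * \<alpha>) + real i * \<alpha>)))"
    by (simp add: power_add algebra_simps)
  also have "\<dots> = lam ^ n * orbit_series lam \<alpha> f (x + real n * \<alpha>)"
    unfolding orbit_series_def by (rule suminf_mult[OF summable])
  moreover have "orbit_series lam \<alpha> f x
      = (\<Sum>i. lam ^ (i + n) * f (x + real (i + n) * \<alpha>)) + (\<Sum>k<n. lam ^ k * f (x + real k * \<alpha>))"
    unfolding orbit_series_def by (rule suminf_split_initial_segment[OF summable])
  ultimately show ?thesis by simp
qed

lemma abs_orbit_series_le:
  assumes "0 \<le> lam" "lam < 1" "\<And>x. \<bar>f x\<bar> \<le> B"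
  shows "\<bar>orbit_series lam \<alpha> f x\<bar> \<le> B / (1 - lam)"
proof -
  have "norm (orbit_series lam \<alpha> f x) \<le> (\<Sum>k. B * lam ^ k)"
    unfolding orbit_series_def
    using abs_orbit_term_le[OF assms(1,3)] assms(1,2) by (intro norm_suminf_le) auto
  also have "\<dots> = B / (1 - lam)" using assms by (simp add: suminf_mult suminf_geometric)
  finally show ?thesis by simp
qed

lemma orbit_series_measurable [measurable]:
  assumes [measurable]: "f \<in> borel_measurable borel"
  shows "orbit_series lam \<alpha> f \<in> borel_measurable borel"
  unfolding orbit_series_def[abs_def] by measurable

lemma abs_sum_geometric_tail_le:
  fixes e y :: "nat \<Rightarrow> real"
  assumes e: "\<And>j. j \<ge> 1 \<Longrightarrow> \<bar>e j\<bar> \<le> D * r ^ j" and "D \<ge> 0" and r: "0 \<le> r" "r < 1"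
    and y: "\<And>k. \<bar>y k\<bar> \<le> B" and "K \<le> n"
  shows "\<bar>\<Sum>k<n-K. e (n - k) * y k\<bar> \<le> B * D * r ^ K / (1 - r)"
proof -
  define m where "m = n - K"
  have "B \<ge> 0" using y[of 0] by linarith
  have "\<bar>\<Sum>k<m. e (n - k) * y k\<bar> \<le> (\<Sum>k<m. D * r ^ (n - k) * B)"
  proof (rule order.trans[OF sum_abs sum_mono])
    fix k assume "k \<in> {..<m}"
    then show "\<bar>e (n - k) * y k\<bar> \<le> D * r ^ (n - k) * B"
      unfolding abs_mult using e[of "n - k"] y[of k] r \<open>D \<ge> 0\<close>
      by (intro mult_mono) (auto simp: m_def)
  qed
  also have "\<dots> = B * D * r ^ K * (\<Sum>i<m. r ^ Suc i)"
  proof -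
    have "r ^ (n - k) = r ^ K * r ^ (m - k)" if "k < m" for k
      using that \<open>K \<le> n\<close> by (simp add: m_def power_add[symmetric])
    then have "(\<Sum>k<m. D * r ^ (n - k) * B) = B * D * r ^ K * (\<Sum>k<m. r ^ (m - k))"
      by (simp add: sum_distrib_left algebra_simps)
    also have "(\<Sum>k<m. r ^ (m - k)) = (\<Sum>i<m. r ^ Suc i)"
      using sum.nat_diff_reindex[of "\<lambda>i. r ^ Suc i" m] by (simp add: Suc_diff_Suc)
    finally show ?thesis .
  qed
  also have "(\<Sum>i<m. r ^ Suc i) \<le> 1 / (1 - r)"
  proof -
    have "(\<Sum>i<m. r ^ Suc i) = r * ((1 - r ^ m) / (1 - r))"
      using r by (simp add: sum_distrib_left[symmetric] sum_gp_strict)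
    also have "\<dots> \<le> 1 / (1 - r)"
    proof -
      have "r * (1 - r ^ m) \<le> 1" using r by (intro mult_le_one) (auto intro: power_le_one)
      then have "r * (1 - r ^ m) / (1 - r) \<le> 1 / (1 - r)" using r by (intro divide_right_mono) auto
      then show ?thesis by simp
    qed
    finally show ?thesis .
  qed
  then have "B * D * r ^ K * (\<Sum>i<m. r ^ Suc i) \<le> B * D * r ^ K * (1 / (1 - r))"
    using \<open>B \<ge> 0\<close> \<open>D \<ge> 0\<close> r by (intro mult_left_mono) auto
  finally show ?thesis by (simp add: m_def)
qed

section \<open>Pisot scaling of the orbit series\<close>

locale pisot_rotation = circle_step_function +
  fixes lam \<alpha> :: real and \<mu> :: nat and a :: "nat \<Rightarrow> int" and D r :: real
  assumes lam: "0 < lam" "lam < 1" and \<mu>: "\<mu> \<ge> 1" and r: "0 < r" "r < 1" and D: "D \<ge> 0"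
    and powers_near_integers: "\<And>j. j \<ge> 1 \<Longrightarrow> \<bar>real \<mu> * (1 / lam) ^ j - real_of_int (a j)\<bar> \<le> D * r ^ j"
begin

abbreviation X :: "real \<Rightarrow> real" where
  "X \<equiv> orbit_series lam \<alpha> (\<lambda>x. real_of_int (b x))"

definition B :: real where
  "B = (\<Sum>i<N. \<bar>real_of_int (b (d i))\<bar>)"

lemma B_nonneg: "B \<ge> 0"
  unfolding B_def by (simp add: sum_nonneg)

lemma X_split:
  "X x = (\<Sum>k<n. lam ^ k * real_of_int (b (x + real k * \<alpha>))) + lam ^ n * X (x + real n * \<alpha>)"
  using lam abs_b_le by (intro orbit_series_split) (auto simp: B_def)

lemma abs_X_le: "\<bar>X x\<bar> \<le> B / (1 - lam)"
  using lam abs_b_le by (intro abs_orbit_series_le) (auto simp: B_def)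

definition err :: "nat \<Rightarrow> real" where
  "err j = real \<mu> * (1 / lam) ^ j - real_of_int (a j)"

text \<open>\<open>phase n\<close> is \<open>\<mu> \<theta>\<^sup>n X\<close> with \<open>\<theta> = 1 / lam\<close> after removing the integer part
  \<open>\<Sum>k<n. a (n - k) * b (x + k \<alpha>)\<close>.\<close>

definition phase :: "nat \<Rightarrow> real \<Rightarrow> real" where
  "phase n x = (\<Sum>k<n. err (n - k) * real_of_int (b (x + real k * \<alpha>))) + real \<mu> * X (x + real n * \<alpha>)"

lemma phase_measurable [measurable]: "phase n \<in> borel_measurable borel"
  unfolding phase_def[abs_def] by measurable

lemma e2pi_X_eq_e2pi_phase:
  "e2pi (real_of_int m * (real \<mu> * (1 / lam) ^ n * X x)) = e2pi (real_of_int m * phase n x)"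
proof -
  define \<theta> where "\<theta> = 1 / lam"
  have \<theta>_lam: "\<theta> ^ k * lam ^ k = 1" for k
    using lam by (simp add: \<theta>_def power_mult_distrib[symmetric])
  have "\<theta> ^ n * lam ^ k = \<theta> ^ (n - k)" if "k < n" for k
  proof -
    have "\<theta> ^ n = \<theta> ^ (n - k) * \<theta> ^ k" using that by (simp flip: power_add)
    then show ?thesis using \<theta>_lam[of k] by (simp add: mult.assoc)
  qed
  then have "\<theta> ^ n * (\<Sum>k<n. lam ^ k * real_of_int (b (x + real k * \<alpha>)))
      = (\<Sum>k<n. \<theta> ^ (n - k) * real_of_int (b (x + real k * \<alpha>)))"
    by (simp add: sum_distrib_left mult.assoc[symmetric])
  then have "\<theta> ^ n * X x = (\<Sum>k<n. \<theta> ^ (n - k) * real_of_int (b (x + real k * \<alpha>))) + X (x + real n * \<alpha>)"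
    using \<theta>_lam[of n] X_split[of x n] by (simp add: distrib_left mult.assoc[symmetric])
  have \<mu>\<theta>: "real \<mu> * \<theta> ^ j = err j + real_of_int (a j)" for j
    by (simp add: err_def \<theta>_def)
  define z where "z = (\<Sum>k<n. a (n - k) * b (x + real k * \<alpha>))"
  have "real \<mu> * \<theta> ^ n * X x = real \<mu> * (\<theta> ^ n * X x)" by simp
  also have "\<dots> = (\<Sum>k<n. real \<mu> * \<theta> ^ (n - k) * real_of_int (b (x + real k * \<alpha>)))
      + real \<mu> * X (x + real n * \<alpha>)"
    unfolding \<open>\<theta> ^ n * X x = _\<close> by (simp add: sum_distrib_left distrib_left mult.assoc)
  also have "\<dots> = phase n x + real_of_int z"
    by (simp add: z_def phase_def \<mu>\<theta> distrib_right sum.distrib)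
  finally have "real_of_int m * (real \<mu> * (1 / lam) ^ n * X x)
      = real_of_int m * phase n x + real_of_int (m * z)"
    by (simp add: \<theta>_def distrib_left)
  then show ?thesis using e2pi_add_of_int[of "real_of_int m * phase n x" "m * z"] by simp
qed

lemma fourier_coeffs_phase_tendsto_0:
  assumes "rajchman (distr leb_T borel X)" and "m \<noteq> 0"
  shows "(\<lambda>n. CLINT x|leb_T. e2pi (real_of_int m * phase n x)) \<longlonglongrightarrow> 0"
proof -
  have "X \<in> borel_measurable leb_T" by (intro borel_measurable_leb_T) measurable
  then have "fourier_transform (distr leb_T borel X) ((real_of_int m * real \<mu>) * (1 / lam) ^ n)
      = (CLINT x|leb_T. e2pi (real_of_int m * phase n x))" for n
    by (simp add: fourier_transform_distr e2pi_X_eq_e2pi_phase[symmetric] mult.assoc)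
  moreover have "(\<lambda>n. fourier_transform (distr leb_T borel X) (real_of_int m * real \<mu> * (1 / lam) ^ n))
      \<longlonglongrightarrow> 0"
    using assms(2) \<mu> lam by (intro rajchman_tendsto_geometric[OF assms(1)]) auto
  ultimately show ?thesis by simp
qed

definition weight :: "nat \<Rightarrow> nat \<Rightarrow> real" where
  "weight n k = (if k < n then err (n - k) else real \<mu> * lam ^ (k - n))"

definition phase_trunc :: "nat \<Rightarrow> nat \<Rightarrow> real \<Rightarrow> real" where
  "phase_trunc n K x = (\<Sum>k\<in>{n-K..<n+K}. weight n k * real_of_int (b (x + real k * \<alpha>)))"

lemma card_phase_trunc_image_le:
  "finite (phase_trunc n K ` {0..<1})" "card (phase_trunc n K ` {0..<1}) \<le> 2 * K * N + 1"
proof -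
  note translates = card_image_sum_translates_le[of "{n-K..<n+K}" "weight n" "\<lambda>k. real k * \<alpha>"]
  show "finite (phase_trunc n K ` {0..<1})"
    using translates(1) unfolding phase_trunc_def[abs_def] by simp
  have "card (phase_trunc n K ` {0..<1}) \<le> card {n-K..<n+K} * N + 1"
    using translates(2) unfolding phase_trunc_def[abs_def] by simp
  also have "\<dots> \<le> 2 * K * N + 1"
    by (intro add_right_mono mult_right_mono) auto
  finally show "card (phase_trunc n K ` {0..<1}) \<le> 2 * K * N + 1" .
qed

lemma phase_minus_phase_trunc:
  assumes "K \<le> n"
  shows "phase n x - phase_trunc n K x
    = (\<Sum>k<n-K. err (n - k) * real_of_int (b (x + real k * \<alpha>)))
      + real \<mu> * lam ^ K * X (x + real (n + K) * \<alpha>)"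
proof -
  define bk where "bk k = real_of_int (b (x + real k * \<alpha>))" for k
  have "(\<Sum>k<n. err (n - k) * bk k) = (\<Sum>k<n-K. err (n - k) * bk k) + (\<Sum>k\<in>{n-K..<n}. err (n - k) * bk k)"
    unfolding lessThan_atLeast0 by (subst sum.atLeastLessThan_concat) auto
  moreover have "phase_trunc n K x = (\<Sum>k\<in>{n-K..<n}. err (n - k) * bk k)
      + (\<Sum>j<K. real \<mu> * lam ^ j * bk (n + j))"
  proof -
    have "phase_trunc n K x = (\<Sum>k\<in>{n-K..<n}. weight n k * bk k) + (\<Sum>k\<in>{n..<n+K}. weight n k * bk k)"
      unfolding phase_trunc_def bk_def using assms by (subst sum.atLeastLessThan_concat) auto
    moreover have "(\<Sum>k\<in>{n..<n+K}. weight n k * bk k) = (\<Sum>j<K. weight n (n + j) * bk (n + j))"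
      using sum.shift_bounds_nat_ivl[of "\<lambda>k. weight n k * bk k" 0 n K]
      by (simp add: atLeast0LessThan add.commute)
    ultimately show ?thesis by (simp add: weight_def)
  qed
  moreover have "X (x + real n * \<alpha>) = (\<Sum>j<K. lam ^ j * bk (n + j)) + lam ^ K * X (x + real (n + K) * \<alpha>)"
    using X_split[of "x + real n * \<alpha>" K] by (simp add: bk_def algebra_simps)
  moreover have "phase n x = (\<Sum>k<n. err (n - k) * bk k) + real \<mu> * X (x + real n * \<alpha>)"
    by (simp add: phase_def bk_def)
  ultimately have "phase n x - phase_trunc n K x
    = (\<Sum>k<n-K. err (n - k) * bk k) + real \<mu> * lam ^ K * X (x + real (n + K) * \<alpha>)"
    by (simp add: sum_distrib_left algebra_simps)
  then show ?thesis by (simp add: bk_def)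
qed

definition \<rho> :: real where
  "\<rho> = max r lam"

definition C :: real where
  "C = B * D / (1 - r) + real \<mu> * B / (1 - lam)"

lemma \<rho>_bounds: "0 < \<rho>" "\<rho> < 1"
  using r lam by (auto simp: \<rho>_def)

lemma abs_phase_minus_phase_trunc_le:
  assumes "K \<le> n"
  shows "\<bar>phase n x - phase_trunc n K x\<bar> \<le> C * \<rho> ^ K"
proof -
  have "\<bar>\<Sum>k<n-K. err (n - k) * real_of_int (b (x + real k * \<alpha>))\<bar> \<le> B * D * r ^ K / (1 - r)"
    using powers_near_integers D r abs_b_le assms
    by (intro abs_sum_geometric_tail_le) (auto simp: err_def B_def)
  also have "\<dots> \<le> B * D * \<rho> ^ K / (1 - r)"
    using r lam B_nonneg D
    by (intro divide_right_mono mult_left_mono power_mono) (auto simp: \<rho>_def)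
  finally have 1: "\<bar>\<Sum>k<n-K. err (n - k) * real_of_int (b (x + real k * \<alpha>))\<bar> \<le> B * D * \<rho> ^ K / (1 - r)" .
  have "\<bar>real \<mu> * lam ^ K * X (x + real (n + K) * \<alpha>)\<bar> = real \<mu> * lam ^ K * \<bar>X (x + real (n + K) * \<alpha>)\<bar>"
    using lam by (simp add: abs_mult)
  also have "\<dots> \<le> real \<mu> * lam ^ K * (B / (1 - lam))"
    using lam by (intro mult_left_mono abs_X_le) auto
  also have "\<dots> \<le> real \<mu> * \<rho> ^ K * (B / (1 - lam))"
    using lam B_nonneg by (intro mult_right_mono mult_left_mono power_mono) (auto simp: \<rho>_def)
  finally have 2: "\<bar>real \<mu> * lam ^ K * X (x + real (n + K) * \<alpha>)\<bar> \<le> real \<mu> * \<rho> ^ K * (B / (1 - lam))" .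
  show ?thesis
    using 1 2 unfolding phase_minus_phase_trunc[OF assms] C_def by (simp add: algebra_simps)
qed

text \<open>The error \<open>C \<rho>\<^sup>K\<close> beats the resolution \<open>1 / (6 L)\<close> needed for \<open>L = 16 K N + 9\<close>, which
  exceeds \<open>8\<close> times the number \<open>2 K N + 1\<close> of values of the truncation.\<close>

lemma ex_truncation_length:
  obtains K where "C * \<rho> ^ K \<le> 1 / (6 * real (16 * K * N + 9))"
proof -
  have "(\<lambda>K. 6 * C * (16 * real N * (real K * \<rho> ^ K) + 9 * \<rho> ^ K)) \<longlonglongrightarrow> 6 * C * (16 * real N * 0 + 9 * 0)"
    using \<rho>_bounds by (intro tendsto_intros powser_times_n_limit_0 LIMSEQ_power_zero) auto
  then have "eventually (\<lambda>K. 6 * C * (16 * real N * (real K * \<rho> ^ K) + 9 * \<rho> ^ K) < 1) sequentially"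
    by (intro order_tendstoD(2)) auto
  then obtain K where "6 * C * (16 * real N * (real K * \<rho> ^ K) + 9 * \<rho> ^ K) < 1"
    using eventually_sequentially by auto
  then have "6 * real (16 * K * N + 9) * (C * \<rho> ^ K) \<le> 1"
    by (simp add: algebra_simps)
  moreover have "0 < 6 * real (16 * K * N + 9)"
    by (intro mult_pos_pos of_nat_0_less_iff[THEN iffD2]) simp_all
  ultimately have "C * \<rho> ^ K \<le> 1 / (6 * real (16 * K * N + 9))"
    by (simp add: pos_le_divide_eq mult.commute)
  then show ?thesis by (rule that)
qed

lemma eventually_fourier_coeffs_phase_small:
  assumes raj: "rajchman (distr leb_T borel X)" and "L \<ge> 1"
  shows "eventually (\<lambda>n. \<forall>m\<in>{m::int. m \<noteq> 0 \<and> \<bar>m\<bar> < int L}.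
    cmod (CLINT x|leb_T. e2pi (real_of_int m * phase n x)) < 1 / real L) sequentially"
proof (rule eventually_ball_finite)
  show "finite {m::int. m \<noteq> 0 \<and> \<bar>m\<bar> < int L}"
    by (rule finite_subset[of _ "{- int L..int L}"]) auto
  show "\<forall>m\<in>{m::int. m \<noteq> 0 \<and> \<bar>m\<bar> < int L}.
      eventually (\<lambda>n. cmod (CLINT x|leb_T. e2pi (real_of_int m * phase n x)) < 1 / real L) sequentially"
    using assms(2) fourier_coeffs_phase_tendsto_0[OF raj]
    by (auto intro!: order_tendstoD(2) tendsto_norm_zero)
qed

theorem not_rajchman: "\<not> rajchman (distr leb_T borel X)"
proof
  assume raj: "rajchman (distr leb_T borel X)"
  obtain K where K: "C * \<rho> ^ K \<le> 1 / (6 * real (16 * K * N + 9))"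
    by (rule ex_truncation_length)
  define L where "L = 16 * K * N + 9"
  have "L \<ge> 1" by (simp add: L_def)
  from eventually_conj[OF eventually_ge_at_top[of K] eventually_fourier_coeffs_phase_small[OF raj this]]
  obtain n where n: "K \<le> n"
    and small: "\<And>m. m \<noteq> 0 \<Longrightarrow> \<bar>m\<bar> < int L \<Longrightarrow>
                  cmod (CLINT x|leb_T. e2pi (real_of_int m * phase n x)) < 1 / real L"
    unfolding eventually_sequentially by blast
  have "real L \<le> 8 * real (card (phase_trunc n K ` {0..<1}))"
  proof (rule card_ge_if_small_fourier_coeffs[OF prob_space_leb_T])
    show "phase n \<in> borel_measurable leb_T" by (intro borel_measurable_leb_T) measurable
    show "\<exists>a\<in>phase_trunc n K ` {0..<1}. \<bar>phase n x - a\<bar> \<le> 1 / (6 * real L)" if "x \<in> space leb_T" for x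
    proof
      show "phase_trunc n K x \<in> phase_trunc n K ` {0..<1}" using that by (simp add: space_leb_T)
      show "\<bar>phase n x - phase_trunc n K x\<bar> \<le> 1 / (6 * real L)"
        unfolding L_def by (rule order.trans[OF abs_phase_minus_phase_trunc_le[OF n] K])
    qed
    show "cmod (CLINT x|leb_T. e2pi (real_of_int m * phase n x)) \<le> 1 / real L"
      if "m \<noteq> 0" "\<bar>m\<bar> < int L" for m
      using small[OF that] by simp
  qed (use card_phase_trunc_image_le in \<open>auto simp: L_def\<close>)
  also have "\<dots> \<le> 8 * real (2 * K * N + 1)"
  proof -
    have "real (card (phase_trunc n K ` {0..<1})) \<le> real (2 * K * N + 1)"
      using card_phase_trunc_image_le(2)[of n K] by (simp only: of_nat_le_iff)
    then show ?thesis by simp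
  qed
  finally show False by (simp add: L_def)
qed

end

theorem mainTheorem3:
  fixes \<alpha> lam :: real and b :: "real \<Rightarrow> int" and N :: nat and d :: "nat \<Rightarrow> real"
    and X :: "real \<Rightarrow> real"
  assumes lam_bd: "0 < lam" "lam < 1" and pis: "pisot (1 / lam)"
    and b_periodic: "\<And>x. b (x + 1) = b x"
    and N_pos: "N \<ge> 1"
    and d_mono: "\<And>i j. i < j \<Longrightarrow> j \<le> N \<Longrightarrow> d i < d j"
    and d_wrap: "d N = d 0 + 1"
    and b_step: "\<And>i x. i < N \<Longrightarrow> d i \<le> x \<Longrightarrow> x < d (Suc i) \<Longrightarrow> b x = b (d i)"
    and X_def: "\<And>x. X x = (\<Sum>k. lam ^ k * of_int (b (x + real k * \<alpha>)))"
  shows "\<not> rajchman (distr leb_T borel X)"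
proof -
  have "circle_step_function b N d"
    using b_periodic N_pos d_mono d_wrap b_step by (rule circle_step_function.intro)
  obtain \<mu> :: nat and a :: "nat \<Rightarrow> int" and D r :: real
    where "\<And>j. j \<ge> 1 \<Longrightarrow> \<bar>real \<mu> * (1 / lam) ^ j - real_of_int (a j)\<bar> \<le> D * r ^ j"
      and "\<mu> \<ge> 1" "0 < r" "r < 1" "D \<ge> 0"
    by (rule pisot_powers_near_integers[OF pis], rule that)
  with \<open>circle_step_function b N d\<close> lam_bd
  interpret pisot_rotation b N d lam \<alpha> \<mu> a D r
    by (intro pisot_rotation.intro pisot_rotation_axioms.intro)
  have "X = orbit_series lam \<alpha> (\<lambda>x. real_of_int (b x))"
    by (simp add: fun_eq_iff X_def orbit_series_def)
  with not_rajchman show ?thesis by simp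
qed

end
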